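(* For all integers $n\ge 1$, $$s_4(n)=\tfrac{4}{15}n^5-\tfrac{4}{3}n^4+\tfrac{11}{3}n^3-\tfrac{37}{6}n^2+\tfrac{167}{30}n-2,$$ $$d_4(n)=\tfrac{4}{45}n^6-\tfrac{2}{5}n^5+\tfrac{25}{18}n^4-\tfrac{7}{2}n^3+\tfrac{226}{45}n^2-\tfrac{18}{5}n+1.$$
   Context: For $n\ge 1$, the $2\times n$ board consists of $2n$ unit squares arranged in 2 rows and $n$ columns; two squares are adjacent iff they share an edge. A piece is a nonempty set of squares that is connected under adjacency. A division of the board into $k$ pieces is a partition of the set of all $2n$ squares into exactly $k$ pieces. $d_k(n)$ denotes the number of divisions of the $2\times n$ board into $k$ pieces. $s_k(n)$ denotes the number of such divisions in which the two squares of the rightmost column lie in different pieces. *)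

theory Defs
  imports Complex_Main
begin

definition board :: "nat \<Rightarrow> (nat \<times> nat) set" where
  "board n = {(r, c). r < 2 \<and> c < n}"

definition adj :: "nat \<times> nat \<Rightarrow> nat \<times> nat \<Rightarrow> bool" where
  "adj p q \<longleftrightarrow> (fst p = fst q \<and> (snd p = snd q + 1 \<or> snd q = snd p + 1)) \<or>
                 (snd p = snd q \<and> (fst p = fst q + 1 \<or> fst q = fst p + 1))"

definition connected_sq :: "(nat \<times> nat) set \<Rightarrow> bool" where
  "connected_sq P \<longleftrightarrow>
     (\<forall>x\<in>P. \<forall>y\<in>P. (x, y) \<in> {(u, v). u \<in> P \<and> v \<in> P \<and> adj u v}\<^sup>*)"

definition piece :: "(nat \<times> nat) set \<Rightarrow> bool" where
  "piece P \<longleftrightarrow> P \<noteq> {} \<and> connected_sq P"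

definition division :: "nat \<Rightarrow> nat \<Rightarrow> (nat \<times> nat) set set \<Rightarrow> bool" where
  "division n k D \<longleftrightarrow>
     (\<forall>P\<in>D. piece P) \<and> \<Union>D = board n \<and>
     (\<forall>P\<in>D. \<forall>Q\<in>D. P \<noteq> Q \<longrightarrow> P \<inter> Q = {}) \<and>
     finite D \<and> card D = k"

definition d :: "nat \<Rightarrow> nat \<Rightarrow> nat" where
  "d k n = card {D. division n k D}"

definition s :: "nat \<Rightarrow> nat \<Rightarrow> nat" where
  "s k n = card {D. division n k D \<and>
                   (\<forall>P\<in>D. \<not> ((0, n - 1) \<in> P \<and> (1, n - 1) \<in> P))}"

end

theory Submission
  imports Defs
begin

(* Cut a division of the 2 x (n+1) board along its last column.  The pieces restricted to
   the first n columns form a division of the 2 x n board, and conversely a division of the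
   2 x n board extends in exactly seven ways: the two new squares form one piece or two, and
   each new piece is either a piece of its own or is glued to the piece of its left neighbour
   (gluing the domino through its lower square only, or gluing both squares separately, needs
   the two squares of column n - 1 to lie in different pieces).  Counting the seven shapes
   gives, for n >= 1,
     s (k+2) (n+1) = d k n + 2 d (k+1) n + s (k+2) n,
     d (k+1) (n+1) = d k n + d (k+1) n + s (k+1) n + s (k+1) (n+1),
   and the polynomials for k = 2, 3, 4 follow by induction on n from d 0 n = 0, d 1 n = 1
   and the values at n = 1. *)

type_synonym region = "(nat \<times> nat) set"

definition sq_edges :: "region \<Rightarrow> ((nat \<times> nat) \<times> (nat \<times> nat)) set" where
  "sq_edges P = {(u, v). u \<in> P \<and> v \<in> P \<and> adj u v}"

lemma connected_sq_iff_edges: "connected_sq P \<longleftrightarrow> (\<forall>x\<in>P. \<forall>y\<in>P. (x, y) \<in> (sq_edges P)\<^sup>*)"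
  by (simp add: connected_sq_def sq_edges_def)

lemma adj_sym: "adj p q \<Longrightarrow> adj q p"
  by (auto simp: adj_def)

lemma sq_edges_rtrancl_mono: "P \<subseteq> Q \<Longrightarrow> (sq_edges P)\<^sup>* \<subseteq> (sq_edges Q)\<^sup>*"
  by (rule rtrancl_mono) (auto simp: sq_edges_def)

lemma connected_sq_singleton: "connected_sq {p}"
  by (simp add: connected_sq_iff_edges)

lemma connected_sq_Un_adj:
  assumes P: "connected_sq P" and Q: "connected_sq Q" and "p \<in> P" "q \<in> Q" "adj p q"
  shows "connected_sq (P \<union> Q)"
  unfolding connected_sq_iff_edges
proof (intro ballI)
  let ?R = "(sq_edges (P \<union> Q))\<^sup>*"
  have inP: "(u, v) \<in> ?R" if "u \<in> P" "v \<in> P" for u v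
    using P that sq_edges_rtrancl_mono[of P "P \<union> Q"] by (auto simp: connected_sq_iff_edges)
  have inQ: "(u, v) \<in> ?R" if "u \<in> Q" "v \<in> Q" for u v
    using Q that sq_edges_rtrancl_mono[of Q "P \<union> Q"] by (auto simp: connected_sq_iff_edges)
  have pq: "(p, q) \<in> ?R" "(q, p) \<in> ?R"
    using assms by (auto simp: sq_edges_def intro: adj_sym)
  fix u v assume "u \<in> P \<union> Q" "v \<in> P \<union> Q"
  then consider "u \<in> P" "v \<in> P" | "u \<in> P" "v \<in> Q" | "u \<in> Q" "v \<in> P" | "u \<in> Q" "v \<in> Q"
    by blast
  then show "(u, v) \<in> ?R"
  proof cases
    case 2 then show ?thesis using inP inQ pq \<open>p \<in> P\<close> \<open>q \<in> Q\<close> by (meson rtrancl_trans)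
  next
    case 3 then show ?thesis using inP inQ pq \<open>p \<in> P\<close> \<open>q \<in> Q\<close> by (meson rtrancl_trans)
  qed (use inP inQ in auto)
qed

lemma rtrancl_exits_set:
  assumes "(u, v) \<in> R\<^sup>*" "u \<in> A" "v \<notin> A"
  shows "\<exists>s t. (s, t) \<in> R \<and> s \<in> A \<and> t \<notin> A"
  using assms by (induction rule: rtrancl_induct) auto

lemma connected_sq_exits_set:
  assumes "connected_sq P" "u \<in> P" "u \<in> C" "\<not> P \<subseteq> C"
  shows "\<exists>s\<in>P \<inter> C. \<exists>t\<in>P - C. adj s t"
proof -
  obtain w where w: "w \<in> P" "w \<notin> C" using assms(4) by blast
  then have "(u, w) \<in> (sq_edges P)\<^sup>*" using assms(1,2) by (auto simp: connected_sq_iff_edges)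
  with rtrancl_exits_set[OF this, of C] assms(3) w(2) show ?thesis
    by (fastforce simp: sq_edges_def)
qed

lemma connected_sq_shrink:
  assumes Q: "connected_sq Q" and TQ: "T \<subseteq> Q"
    and X: "\<forall>z1\<in>X. \<forall>z2\<in>X. (z1, z2) \<in> (sq_edges T)\<^sup>*"
    and boundary: "\<forall>s\<in>Q - T. \<forall>t\<in>T. adj s t \<longrightarrow> t \<in> X"
  shows "connected_sq T"
  unfolding connected_sq_iff_edges
proof (intro ballI)
  fix u v assume u: "u \<in> T" and v: "v \<in> T"
  have "(w \<in> T \<longrightarrow> (u, w) \<in> (sq_edges T)\<^sup>*) \<and> (w \<notin> T \<longrightarrow> (\<forall>z\<in>X. (u, z) \<in> (sq_edges T)\<^sup>*))"
    if "(u, w) \<in> (sq_edges Q)\<^sup>*" for w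
    using that
  proof (induction rule: rtrancl_induct)
    case base
    then show ?case using u by auto
  next
    case (step w w')
    then have a: "adj w w'" "w \<in> Q" "w' \<in> Q" by (auto simp: sq_edges_def)
    consider "w \<in> T" "w' \<in> T" | "w \<in> T" "w' \<notin> T" | "w \<notin> T" "w' \<in> T" | "w \<notin> T" "w' \<notin> T"
      by blast
    then show ?case
    proof cases
      case 1
      then have "(w, w') \<in> sq_edges T" using a by (auto simp: sq_edges_def)
      then show ?thesis using step.IH 1 by (meson rtrancl.rtrancl_into_rtrancl)
    next
      case 2
      then have "w \<in> X" using boundary a adj_sym by blast
      then show ?thesis using step.IH 2 X by (meson rtrancl_trans)
    next
      case 3
      then have "w' \<in> X" using boundary a by blast
      then show ?thesis using step.IH 3 by auto
    qed (use step.IH in auto)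
  qed
  moreover have "(u, v) \<in> (sq_edges Q)\<^sup>*" using Q u v TQ by (auto simp: connected_sq_iff_edges)
  ultimately show "(u, v) \<in> (sq_edges T)\<^sup>*" using v by auto
qed

definition piece_partition :: "region \<Rightarrow> region set \<Rightarrow> bool" where
  "piece_partition U D \<longleftrightarrow> (\<forall>P\<in>D. piece P) \<and> \<Union>D = U \<and>
     (\<forall>P\<in>D. \<forall>Q\<in>D. P \<noteq> Q \<longrightarrow> P \<inter> Q = {}) \<and> finite D"

lemma division_iff_partition: "division n k D \<longleftrightarrow> piece_partition (board n) D \<and> card D = k"
  by (auto simp: division_def piece_partition_def)

lemma piece_partition_subset: "piece_partition U D \<Longrightarrow> P \<in> D \<Longrightarrow> P \<subseteq> U"
  by (auto simp: piece_partition_def)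

lemma piece_partition_nonempty: "piece_partition U D \<Longrightarrow> P \<in> D \<Longrightarrow> P \<noteq> {}"
  by (auto simp: piece_partition_def piece_def)

lemma piece_partition_connected: "piece_partition U D \<Longrightarrow> P \<in> D \<Longrightarrow> connected_sq P"
  by (auto simp: piece_partition_def piece_def)

lemma piece_partition_disjoint:
  "piece_partition U D \<Longrightarrow> P \<in> D \<Longrightarrow> Q \<in> D \<Longrightarrow> P \<noteq> Q \<Longrightarrow> P \<inter> Q = {}"
  by (auto simp: piece_partition_def)

lemma piece_partition_unique:
  "piece_partition U D \<Longrightarrow> P \<in> D \<Longrightarrow> Q \<in> D \<Longrightarrow> z \<in> P \<Longrightarrow> z \<in> Q \<Longrightarrow> P = Q"
  using piece_partition_disjoint by blast

definition piece_of :: "region set \<Rightarrow> nat \<times> nat \<Rightarrow> region" where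
  "piece_of D z = (THE P. P \<in> D \<and> z \<in> P)"

lemma piece_of_eq: "piece_partition U D \<Longrightarrow> P \<in> D \<Longrightarrow> z \<in> P \<Longrightarrow> piece_of D z = P"
  unfolding piece_of_def by (rule the_equality) (auto dest: piece_partition_unique)

lemma piece_of_in:
  assumes "piece_partition U D" "z \<in> U"
  shows "piece_of D z \<in> D" "z \<in> piece_of D z"
proof -
  obtain P where "P \<in> D" "z \<in> P" using assms unfolding piece_partition_def by blast
  then show "piece_of D z \<in> D" "z \<in> piece_of D z" using piece_of_eq[OF assms(1)] by auto
qed

lemma piece_partition_insert:
  assumes "piece_partition U D" "piece A" "A \<inter> U = {}"
  shows "piece_partition (U \<union> A) (insert A D)" "card (insert A D) = Suc (card D)"
proof -
  have sub: "\<forall>Q\<in>D. Q \<subseteq> U" using piece_partition_subset[OF assms(1)] by auto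
  then have "A \<notin> D" using assms(2,3) by (auto simp: piece_def)
  then show "card (insert A D) = Suc (card D)" using assms(1) by (auto simp: piece_partition_def)
  have "\<forall>Q\<in>D. Q \<inter> A = {} \<and> A \<inter> Q = {}" using sub assms(3) by blast
  then show "piece_partition (U \<union> A) (insert A D)"
    using assms(1,2) unfolding piece_partition_def by auto
qed

definition glue :: "region set \<Rightarrow> region \<Rightarrow> region \<Rightarrow> region set" where
  "glue D P A = insert (P \<union> A) (D - {P})"

lemma glue_insert: "R \<notin> X \<Longrightarrow> glue (insert R X) R A = insert (R \<union> A) X"
  by (auto simp: glue_def)

lemma piece_partition_glue:
  assumes D: "piece_partition U D" and P: "P \<in> D"
    and A: "A \<inter> U = {}" "A \<noteq> {}" "connected_sq (P \<union> A)"
  shows "piece_partition (U \<union> A) (glue D P A)" "card (glue D P A) = card D"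
proof -
  have fin: "finite D" and U: "\<Union>D = U" using D by (auto simp: piece_partition_def)
  have sub: "\<forall>Q\<in>D. Q \<subseteq> U" using piece_partition_subset[OF D] by auto
  have "\<not> P \<union> A \<subseteq> U" using A(1,2) by blast
  then have "P \<union> A \<notin> D - {P}" using sub by blast
  then have "card (glue D P A) = Suc (card (D - {P}))" using fin by (simp add: glue_def)
  also have "\<dots> = card D" using fin P by (rule card_Suc_Diff1)
  finally show "card (glue D P A) = card D" .
  have pieces: "\<forall>Q\<in>glue D P A. piece Q"
    using D A(2,3) by (simp add: glue_def piece_partition_def piece_def)
  have union: "\<Union>(glue D P A) = U \<union> A"
    using U P unfolding glue_def by blast
  have disjoint: "Q1 \<inter> Q2 = {}" if "Q1 \<in> glue D P A" "Q2 \<in> glue D P A" "Q1 \<noteq> Q2" for Q1 Q2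
  proof -
    have "Q \<inter> (P \<union> A) = {}" if "Q \<in> D - {P}" for Q
      using that sub P A(1) piece_partition_disjoint[OF D] by blast
    then show ?thesis using that piece_partition_disjoint[OF D] unfolding glue_def by blast
  qed
  show "piece_partition (U \<union> A) (glue D P A)"
    unfolding piece_partition_def using pieces union disjoint fin by (simp add: glue_def)
qed

definition restrict_partition :: "region \<Rightarrow> region set \<Rightarrow> region set" where
  "restrict_partition U D = (\<lambda>Q. Q \<inter> U) ` D - {{}}"

lemma restrict_partition_id:
  assumes "\<forall>P\<in>D. P \<subseteq> U \<and> P \<noteq> {}"
  shows "restrict_partition U D = D"
proof -
  have "(\<lambda>Q. Q \<inter> U) ` D = D" using assms by (auto simp: image_iff Int_absorb2)
  then show ?thesis using assms unfolding restrict_partition_def by auto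
qed

lemma restrict_partition_self: "piece_partition U D \<Longrightarrow> restrict_partition U D = D"
  by (rule restrict_partition_id) (auto dest: piece_partition_subset piece_partition_nonempty)

lemma restrict_partition_insert:
  "A \<inter> U = {} \<Longrightarrow> restrict_partition U (insert A D) = restrict_partition U D"
  unfolding restrict_partition_def by auto

lemma restrict_partition_glue:
  assumes "P \<in> D" "A \<inter> U = {}" "P \<inter> U \<noteq> {}"
  shows "restrict_partition U (glue D P A) = restrict_partition U D"
proof -
  have "(P \<union> A) \<inter> U = P \<inter> U" using assms(2) by blast
  then have "(\<lambda>Q. Q \<inter> U) ` (glue D P A) = (\<lambda>Q. Q \<inter> U) ` D"
    unfolding glue_def using assms(1) by auto
  then show ?thesis unfolding restrict_partition_def by simp
qed

lemma restrict_partition_split: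
  assumes "F \<subseteq> D" "\<forall>Q\<in>D - F. Q \<subseteq> U \<and> Q \<noteq> {}"
  shows "restrict_partition U D = restrict_partition U F \<union> (D - F)"
proof -
  have "D = F \<union> (D - F)" using assms(1) by blast
  then have "restrict_partition U D = restrict_partition U F \<union> restrict_partition U (D - F)"
    unfolding restrict_partition_def by (metis Un_Diff image_Un)
  then show ?thesis using restrict_partition_id[OF assms(2)] by simp
qed

lemma restrict_partition_insert_eq:
  "restrict_partition U (insert P F) =
     (if P \<inter> U = {} then {} else {P \<inter> U}) \<union> restrict_partition U F"
  by (auto simp: restrict_partition_def)

lemma restrict_partition_empty: "restrict_partition U {} = {}"
  by (simp add: restrict_partition_def)

lemma board_eq: "board n = {0..<2} \<times> {0..<n}"
  by (auto simp: board_def)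

lemma board_Suc: "board (Suc n) = board n \<union> {(0, n), (1, n)}"
  by (auto simp: board_def)

lemma new_column_disjoint:
  "{(0, n), (1, n)} \<inter> board n = {}" "{(0, n)} \<inter> board n = {}" "{(1, n)} \<inter> board n = {}"
  "{(0, n)} \<inter> (board n \<union> {(1, n)}) = {}"
  by (auto simp: board_def)

lemma last_column_in_board: "1 \<le> n \<Longrightarrow> r \<le> 1 \<Longrightarrow> (r, n - 1) \<in> board n"
  by (auto simp: board_def)

lemma adj_last_column: "1 \<le> n \<Longrightarrow> adj (0, n - 1) (1, n - 1)"
  by (auto simp: adj_def)

lemma adj_new_column: "1 \<le> n \<Longrightarrow> adj (r, n - 1) (r, n)"
  by (auto simp: adj_def)

lemma adj_new_column_board: "t \<in> board n \<Longrightarrow> adj (r, n) t \<Longrightarrow> t = (r, n - 1)"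
  by (auto simp: board_def adj_def)

lemma connected_sq_column: "connected_sq {(0::nat, n), (1, n)}"
  unfolding connected_sq_iff_edges sq_edges_def by (auto intro!: r_into_rtrancl simp: adj_def)

lemma piece_column: "piece {(0::nat, n), (1, n)}"
  using connected_sq_column by (simp add: piece_def)

lemma piece_singleton: "piece {p}"
  by (simp add: piece_def connected_sq_singleton)

lemma connected_board: "1 \<le> n \<Longrightarrow> connected_sq (board n)"
proof (induction n rule: nat_induct_at_least)
  case base
  have "board 1 = {(0, 0), (1, 0)}" by (auto simp: board_def)
  then show ?case using connected_sq_column[of 0] by simp
next
  case (Suc n)
  have "connected_sq (board n \<union> {(0, n), (1, n)})"
    by (rule connected_sq_Un_adj[OF Suc.IH connected_sq_column
          last_column_in_board[OF Suc.hyps le0] _ adj_new_column[OF Suc.hyps]]) auto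
  then show ?case by (simp add: board_Suc)
qed

lemma piece_restrict_board:
  assumes n: "1 \<le> n" and D: "piece_partition (board (Suc n)) D" and Q: "Q \<in> D"
    and meets: "Q \<inter> board n \<noteq> {}"
  shows "piece (Q \<inter> board n)"
proof -
  let ?B = "board n" and ?X = "{(0, n - 1), (1, n - 1)} \<inter> (Q \<inter> board n)"
  have X: "\<forall>z1\<in>?X. \<forall>z2\<in>?X. (z1, z2) \<in> (sq_edges (Q \<inter> ?B))\<^sup>*"
  proof (intro ballI)
    fix z1 z2 assume z: "z1 \<in> ?X" "z2 \<in> ?X"
    show "(z1, z2) \<in> (sq_edges (Q \<inter> ?B))\<^sup>*"
    proof (cases "z1 = z2")
      case False
      then have "adj z1 z2" using z adj_last_column[OF n] adj_sym by auto
      then have "(z1, z2) \<in> sq_edges (Q \<inter> ?B)" using z by (auto simp: sq_edges_def)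
      then show ?thesis by auto
    qed auto
  qed
  have "\<forall>s\<in>Q - Q \<inter> ?B. \<forall>t\<in>Q \<inter> ?B. adj s t \<longrightarrow> t \<in> ?X"
  proof (intro ballI impI)
    fix s t assume s: "s \<in> Q - Q \<inter> ?B" and t: "t \<in> Q \<inter> ?B" and "adj s t"
    have "s = (0, n) \<or> s = (1, n)" using s piece_partition_subset[OF D Q] board_Suc by auto
    then show "t \<in> ?X" using adj_new_column_board[of t n] t \<open>adj s t\<close> by auto
  qed
  with connected_sq_shrink[OF piece_partition_connected[OF D Q] _ X]
  have "connected_sq (Q \<inter> ?B)" by auto
  then show ?thesis using meets by (simp add: piece_def)
qed

lemma piece_partition_restrict_board:
  assumes n: "1 \<le> n" and D: "piece_partition (board (Suc n)) D"
  shows "piece_partition (board n) (restrict_partition (board n) D)"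
proof -
  let ?B = "board n" and ?S = "restrict_partition (board n) D"
  have "\<Union>?S = (\<Union>D) \<inter> ?B" unfolding restrict_partition_def by auto
  also have "\<dots> = ?B" using D by (auto simp: piece_partition_def board_def)
  finally have "\<Union>?S = ?B" .
  moreover have "\<forall>P\<in>?S. piece P"
    using piece_restrict_board[OF n D] unfolding restrict_partition_def by auto
  moreover have "\<forall>P\<in>?S. \<forall>Q\<in>?S. P \<noteq> Q \<longrightarrow> P \<inter> Q = {}"
    unfolding restrict_partition_def using piece_partition_disjoint[OF D] by blast
  moreover have "finite ?S"
    using D unfolding restrict_partition_def piece_partition_def by auto
  ultimately show ?thesis unfolding piece_partition_def by blast
qed

definition column_split :: "region set \<Rightarrow> nat \<Rightarrow> bool" where
  "column_split D c \<longleftrightarrow> (\<forall>P\<in>D. \<not> ((0, c) \<in> P \<and> (1, c) \<in> P))"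

lemma s_eq_card_column_split: "s k n = card {D. division n k D \<and> column_split D (n - 1)}"
  by (simp add: s_def column_split_def)

lemma left_piece:
  assumes "1 \<le> n" "piece_partition (board n) D" "r \<le> 1"
  shows "piece_of D (r, n - 1) \<in> D" "(r, n - 1) \<in> piece_of D (r, n - 1)"
    "piece_of D (r, n - 1) \<subseteq> board n" "piece_of D (r, n - 1) \<inter> board n \<noteq> {}"
  using last_column_in_board[OF assms(1,3)]
    piece_of_in[OF assms(2) last_column_in_board[OF assms(1,3)]]
    piece_partition_subset[OF assms(2)] by auto

lemma connected_left_piece_Un:
  assumes "1 \<le> n" "piece_partition (board n) D" "r \<le> 1" "connected_sq A" "(r, n) \<in> A"
  shows "connected_sq (piece_of D (r, n - 1) \<union> A)"
  using connected_sq_Un_adj[OF piece_partition_connected[OF assms(2)] assms(4)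
      left_piece(2)[OF assms(1-3)] assms(5) adj_new_column[OF assms(1)]]
    left_piece(1)[OF assms(1-3)] by simp

lemma column_split_left_pieces:
  assumes "1 \<le> n" "piece_partition (board n) D" "column_split D (n - 1)"
  shows "(0, n - 1) \<notin> piece_of D (1, n - 1)"
  using assms left_piece[OF assms(1,2) le_refl] unfolding column_split_def by auto

text \<open>In the names of the seven extensions by column \<open>n\<close> and of their shapes,
  \<open>domino\<close> means that the two new squares form one piece; \<open>top\<close> (\<open>bot\<close>) means that the
  upper (lower) new square, or the domino through it, joins the piece of its left neighbour;
  \<open>new\<close> means that a new square forms a piece of its own.\<close>

definition ext_domino_new :: "nat \<Rightarrow> region set \<Rightarrow> region set" where
  "ext_domino_new n D = insert {(0, n), (1, n)} D"

definition ext_domino_top :: "nat \<Rightarrow> region set \<Rightarrow> region set" where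
  "ext_domino_top n D = glue D (piece_of D (0, n - 1)) {(0, n), (1, n)}"

definition ext_domino_bot :: "nat \<Rightarrow> region set \<Rightarrow> region set" where
  "ext_domino_bot n D = glue D (piece_of D (1, n - 1)) {(0, n), (1, n)}"

definition ext_new_new :: "nat \<Rightarrow> region set \<Rightarrow> region set" where
  "ext_new_new n D = insert {(0, n)} (insert {(1, n)} D)"

definition ext_top_new :: "nat \<Rightarrow> region set \<Rightarrow> region set" where
  "ext_top_new n D = glue (insert {(1, n)} D) (piece_of D (0, n - 1)) {(0, n)}"

definition ext_new_bot :: "nat \<Rightarrow> region set \<Rightarrow> region set" where
  "ext_new_bot n D = insert {(0, n)} (glue D (piece_of D (1, n - 1)) {(1, n)})"

definition ext_top_bot :: "nat \<Rightarrow> region set \<Rightarrow> region set" where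
  "ext_top_bot n D =
     glue (glue D (piece_of D (1, n - 1)) {(1, n)}) (piece_of D (0, n - 1)) {(0, n)}"

definition shape_domino_new :: "nat \<Rightarrow> region set \<Rightarrow> bool" where
  "shape_domino_new n D \<longleftrightarrow> {(0, n), (1, n)} \<in> D"

definition shape_domino_top :: "nat \<Rightarrow> region set \<Rightarrow> bool" where
  "shape_domino_top n D \<longleftrightarrow> (\<exists>P\<in>D. (0, n) \<in> P \<and> (1, n) \<in> P \<and> (0, n - 1) \<in> P)"

definition shape_domino_bot :: "nat \<Rightarrow> region set \<Rightarrow> bool" where
  "shape_domino_bot n D \<longleftrightarrow>
     (\<exists>P\<in>D. (0, n) \<in> P \<and> (1, n) \<in> P \<and> (1, n - 1) \<in> P \<and> (0, n - 1) \<notin> P)"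

definition shape_new_new :: "nat \<Rightarrow> region set \<Rightarrow> bool" where
  "shape_new_new n D \<longleftrightarrow> {(0, n)} \<in> D \<and> {(1, n)} \<in> D"

definition shape_top_new :: "nat \<Rightarrow> region set \<Rightarrow> bool" where
  "shape_top_new n D \<longleftrightarrow> {(1, n)} \<in> D \<and> (\<exists>P\<in>D. (0, n) \<in> P \<and> (0, n - 1) \<in> P)"

definition shape_new_bot :: "nat \<Rightarrow> region set \<Rightarrow> bool" where
  "shape_new_bot n D \<longleftrightarrow> {(0, n)} \<in> D \<and> (\<exists>Q\<in>D. (1, n) \<in> Q \<and> (1, n - 1) \<in> Q)"

definition shape_top_bot :: "nat \<Rightarrow> region set \<Rightarrow> bool" where
  "shape_top_bot n D \<longleftrightarrow> (\<exists>P\<in>D. \<exists>Q\<in>D. P \<noteq> Q \<and>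
     (0, n) \<in> P \<and> (0, n - 1) \<in> P \<and> (1, n) \<in> Q \<and> (1, n - 1) \<in> Q)"

lemma ext_domino_new_division:
  assumes n: "1 \<le> n" and D: "division n m D"
  shows "division (Suc n) (Suc m) (ext_domino_new n D) \<and> shape_domino_new n (ext_domino_new n D)
    \<and> restrict_partition (board n) (ext_domino_new n D) = D"
proof -
  have P: "piece_partition (board n) D" "card D = m" using D by (auto simp: division_iff_partition)
  note E = piece_partition_insert[OF P(1) piece_column new_column_disjoint(1)]
  have "restrict_partition (board n) (ext_domino_new n D) = D"
    unfolding ext_domino_new_def restrict_partition_insert[OF new_column_disjoint(1)]
    by (rule restrict_partition_self[OF P(1)])
  then show ?thesis
    using E P unfolding ext_domino_new_def division_iff_partition shape_domino_new_def
    by (simp add: board_Suc)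
qed

lemma ext_domino_top_division:
  assumes n: "1 \<le> n" and D: "division n m D"
  shows "division (Suc n) m (ext_domino_top n D) \<and> shape_domino_top n (ext_domino_top n D)
    \<and> restrict_partition (board n) (ext_domino_top n D) = D"
proof -
  have P: "piece_partition (board n) D" "card D = m" using D by (auto simp: division_iff_partition)
  note L = left_piece[OF n P(1) le0]
  note E = piece_partition_glue[OF P(1) L(1) new_column_disjoint(1) _
      connected_left_piece_Un[OF n P(1) le0 connected_sq_column]]
  have "restrict_partition (board n) (ext_domino_top n D) = D"
    unfolding ext_domino_top_def restrict_partition_glue[OF L(1) new_column_disjoint(1) L(4)]
    by (rule restrict_partition_self[OF P(1)])
  then show ?thesis using E P L
    unfolding ext_domino_top_def division_iff_partition shape_domino_top_def glue_def
    by (simp add: board_Suc)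
qed

lemma ext_domino_bot_division:
  assumes n: "1 \<le> n" and D: "division n m D" and split: "column_split D (n - 1)"
  shows "division (Suc n) m (ext_domino_bot n D) \<and> shape_domino_bot n (ext_domino_bot n D)
    \<and> restrict_partition (board n) (ext_domino_bot n D) = D"
proof -
  have P: "piece_partition (board n) D" "card D = m" using D by (auto simp: division_iff_partition)
  note L = left_piece[OF n P(1) le_refl]
  note E = piece_partition_glue[OF P(1) L(1) new_column_disjoint(1) _
      connected_left_piece_Un[OF n P(1) le_refl connected_sq_column]]
  have "restrict_partition (board n) (ext_domino_bot n D) = D"
    unfolding ext_domino_bot_def restrict_partition_glue[OF L(1) new_column_disjoint(1) L(4)]
    by (rule restrict_partition_self[OF P(1)])
  moreover have "(0, n - 1) \<notin> piece_of D (1, n - 1) \<union> {(0, n), (1, n)}"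
    using column_split_left_pieces[OF n P(1) split] n by auto
  ultimately show ?thesis using E P L
    unfolding ext_domino_bot_def division_iff_partition shape_domino_bot_def glue_def
    by (simp add: board_Suc)
qed

lemma ext_new_new_division:
  assumes n: "1 \<le> n" and D: "division n m D"
  shows "division (Suc n) (Suc (Suc m)) (ext_new_new n D) \<and> shape_new_new n (ext_new_new n D)
    \<and> restrict_partition (board n) (ext_new_new n D) = D"
proof -
  have P: "piece_partition (board n) D" "card D = m" using D by (auto simp: division_iff_partition)
  note E1 = piece_partition_insert[OF P(1) piece_singleton new_column_disjoint(3)]
  note E2 = piece_partition_insert[OF E1(1) piece_singleton new_column_disjoint(4)]
  have "restrict_partition (board n) (ext_new_new n D) = D"
    unfolding ext_new_new_def restrict_partition_insert[OF new_column_disjoint(2)]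
      restrict_partition_insert[OF new_column_disjoint(3)]
    by (rule restrict_partition_self[OF P(1)])
  then show ?thesis using E1 E2 P
    unfolding ext_new_new_def division_iff_partition shape_new_new_def by (simp add: board_Suc)
qed

lemma ext_top_new_division:
  assumes n: "1 \<le> n" and D: "division n m D"
  shows "division (Suc n) (Suc m) (ext_top_new n D) \<and> shape_top_new n (ext_top_new n D)
    \<and> restrict_partition (board n) (ext_top_new n D) = D"
proof -
  have P: "piece_partition (board n) D" "card D = m" using D by (auto simp: division_iff_partition)
  note L = left_piece[OF n P(1) le0]
  note E1 = piece_partition_insert[OF P(1) piece_singleton new_column_disjoint(3)]
  have L': "piece_of D (0, n - 1) \<in> insert {(1, n)} D" using L(1) by simp
  note E2 = piece_partition_glue[OF E1(1) L' new_column_disjoint(4) _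
      connected_left_piece_Un[OF n P(1) le0 connected_sq_singleton]]
  have "piece_of D (0, n - 1) \<noteq> {(1, n)}" using L(3) new_column_disjoint(3) by auto
  moreover have "restrict_partition (board n) (ext_top_new n D) = D"
    unfolding ext_top_new_def restrict_partition_glue[OF L' new_column_disjoint(2) L(4)]
      restrict_partition_insert[OF new_column_disjoint(3)]
    by (rule restrict_partition_self[OF P(1)])
  ultimately show ?thesis using E1 E2 P L
    unfolding ext_top_new_def division_iff_partition shape_top_new_def glue_def
    by (simp add: board_Suc)
qed

lemma ext_new_bot_division:
  assumes n: "1 \<le> n" and D: "division n m D"
  shows "division (Suc n) (Suc m) (ext_new_bot n D) \<and> shape_new_bot n (ext_new_bot n D)
    \<and> restrict_partition (board n) (ext_new_bot n D) = D"
proof -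
  have P: "piece_partition (board n) D" "card D = m" using D by (auto simp: division_iff_partition)
  note L = left_piece[OF n P(1) le_refl]
  note E1 = piece_partition_glue[OF P(1) L(1) new_column_disjoint(3) _
      connected_left_piece_Un[OF n P(1) le_refl connected_sq_singleton]]
  note E2 = piece_partition_insert[OF E1(1) piece_singleton new_column_disjoint(4)]
  have "restrict_partition (board n) (ext_new_bot n D) = D"
    unfolding ext_new_bot_def restrict_partition_insert[OF new_column_disjoint(2)]
      restrict_partition_glue[OF L(1) new_column_disjoint(3) L(4)]
    by (rule restrict_partition_self[OF P(1)])
  then show ?thesis using E1 E2 P L
    unfolding ext_new_bot_def division_iff_partition shape_new_bot_def glue_def
    by (simp add: board_Suc)
qed

lemma ext_top_bot_division:
  assumes n: "1 \<le> n" and D: "division n m D" and split: "column_split D (n - 1)"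
  shows "division (Suc n) m (ext_top_bot n D) \<and> shape_top_bot n (ext_top_bot n D)
    \<and> restrict_partition (board n) (ext_top_bot n D) = D"
proof -
  have P: "piece_partition (board n) D" "card D = m" using D by (auto simp: division_iff_partition)
  note L0 = left_piece[OF n P(1) le0] and L1 = left_piece[OF n P(1) le_refl]
  have distinct: "piece_of D (0, n - 1) \<noteq> piece_of D (1, n - 1)"
    using L0(2) column_split_left_pieces[OF n P(1) split] by auto
  note E1 = piece_partition_glue[OF P(1) L1(1) new_column_disjoint(3) _
      connected_left_piece_Un[OF n P(1) le_refl connected_sq_singleton]]
  have L0': "piece_of D (0, n - 1) \<in> glue D (piece_of D (1, n - 1)) {(1, n)}"
    using L0(1) distinct unfolding glue_def by simp
  note E2 = piece_partition_glue[OF E1(1) L0' new_column_disjoint(4) _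
      connected_left_piece_Un[OF n P(1) le0 connected_sq_singleton]]
  have "restrict_partition (board n) (ext_top_bot n D) = D"
    unfolding ext_top_bot_def restrict_partition_glue[OF L0' new_column_disjoint(2) L0(4)]
      restrict_partition_glue[OF L1(1) new_column_disjoint(3) L1(4)]
    by (rule restrict_partition_self[OF P(1)])
  moreover have "shape_top_bot n (ext_top_bot n D)"
  proof -
    let ?P = "piece_of D (0, n - 1) \<union> {(0, n)}" and ?Q = "piece_of D (1, n - 1) \<union> {(1, n)}"
    have "?Q \<noteq> piece_of D (0, n - 1)" using L0(3) new_column_disjoint(3) by auto
    then have "?P \<in> ext_top_bot n D" "?Q \<in> ext_top_bot n D"
      unfolding ext_top_bot_def glue_def by auto
    moreover have "(0, n) \<notin> ?Q" using L1(3) new_column_disjoint(2) by auto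
    then have "?P \<noteq> ?Q \<and> (0, n) \<in> ?P \<and> (0, n - 1) \<in> ?P \<and> (1, n) \<in> ?Q \<and> (1, n - 1) \<in> ?Q"
      using L0(2) L1(2) by blast
    ultimately show ?thesis unfolding shape_top_bot_def by (intro bexI)
  qed
  ultimately show ?thesis using E1 E2 P
    unfolding ext_top_bot_def division_iff_partition by (simp add: board_Suc)
qed

lemma piece_subset_board_Suc:
  "piece_partition (board (Suc n)) D' \<Longrightarrow> P \<in> D' \<Longrightarrow> P \<subseteq> board n \<union> {(0, n), (1, n)}"
  using piece_partition_subset by (fastforce simp: board_Suc)

lemma restrict_piece_notin_others:
  "piece_partition U D' \<Longrightarrow> P \<in> D' \<Longrightarrow> z \<in> P \<inter> V \<Longrightarrow> P \<inter> V \<notin> D' - {P}"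
  using piece_partition_disjoint[of U D' P "P \<inter> V"] by blast

lemma restrict_partition_board:
  assumes D': "piece_partition (board (Suc n)) D'" and F: "F \<subseteq> D'" "(0, n) \<in> \<Union>F" "(1, n) \<in> \<Union>F"
  shows "restrict_partition (board n) D' = restrict_partition (board n) F \<union> (D' - F)"
proof (rule restrict_partition_split[OF F(1)], intro ballI conjI)
  fix Q assume Q: "Q \<in> D' - F"
  then have "(0, n) \<notin> Q" "(1, n) \<notin> Q" using F piece_partition_unique[OF D'] by blast+
  then show "Q \<subseteq> board n" using piece_subset_board_Suc[OF D'] Q by blast
  show "Q \<noteq> {}" using piece_partition_nonempty[OF D'] Q by blast
qed

lemma ext_domino_new_restrict:
  assumes D': "piece_partition (board (Suc n)) D'" and shape: "shape_domino_new n D'"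
  shows "ext_domino_new n (restrict_partition (board n) D') = D'"
proof -
  let ?A = "{(0, n), (1, n)}"
  have A: "?A \<in> D'" using shape by (simp add: shape_domino_new_def)
  have "restrict_partition (board n) D' = D' - {?A}"
    using restrict_partition_board[OF D', of "{?A}"] A new_column_disjoint(1)
    by (simp add: restrict_partition_insert_eq restrict_partition_empty)
  then show ?thesis using A unfolding ext_domino_new_def by blast
qed

lemma ext_domino_top_restrict:
  assumes n: "1 \<le> n" and D': "piece_partition (board (Suc n)) D'" and shape: "shape_domino_top n D'"
  shows "ext_domino_top n (restrict_partition (board n) D') = D'"
proof -
  let ?B = "board n" and ?S = "restrict_partition (board n) D'"
  obtain P where P: "P \<in> D'" "(0, n) \<in> P" "(1, n) \<in> P" "(0, n - 1) \<in> P"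
    using shape by (auto simp: shape_domino_top_def)
  have x: "(0, n - 1) \<in> P \<inter> ?B" using P(4) last_column_in_board[OF n le0] by blast
  have S: "?S = insert (P \<inter> ?B) (D' - {P})"
    using restrict_partition_board[OF D', of "{P}"] P x
    by (auto simp: restrict_partition_insert_eq restrict_partition_empty)
  have piece: "piece_of ?S (0, n - 1) = P \<inter> ?B"
    by (rule piece_of_eq[OF piece_partition_restrict_board[OF n D'] _ x]) (simp add: S)
  have PB: "P \<inter> ?B \<union> {(0, n), (1, n)} = P"
    using piece_subset_board_Suc[OF D' P(1)] P(2,3) by blast
  show ?thesis
    unfolding ext_domino_top_def piece unfolding S
      glue_insert[OF restrict_piece_notin_others[OF D' P(1) x]] PB
    using P(1) by blast
qed

lemma ext_domino_bot_restrict: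
  assumes n: "1 \<le> n" and D': "piece_partition (board (Suc n)) D'" and shape: "shape_domino_bot n D'"
  shows "column_split (restrict_partition (board n) D') (n - 1)
    \<and> ext_domino_bot n (restrict_partition (board n) D') = D'"
proof -
  let ?B = "board n" and ?S = "restrict_partition (board n) D'"
  obtain P where P: "P \<in> D'" "(0, n) \<in> P" "(1, n) \<in> P" "(1, n - 1) \<in> P" "(0, n - 1) \<notin> P"
    using shape by (auto simp: shape_domino_bot_def)
  have y: "(1, n - 1) \<in> P \<inter> ?B" using P(4) last_column_in_board[OF n le_refl] by blast
  have S: "?S = insert (P \<inter> ?B) (D' - {P})"
    using restrict_partition_board[OF D', of "{P}"] P y
    by (auto simp: restrict_partition_insert_eq restrict_partition_empty)
  have "column_split ?S (n - 1)"
    unfolding column_split_def S using P y piece_partition_unique[OF D'] by blast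
  moreover have piece: "piece_of ?S (1, n - 1) = P \<inter> ?B"
    by (rule piece_of_eq[OF piece_partition_restrict_board[OF n D'] _ y]) (simp add: S)
  have PB: "P \<inter> ?B \<union> {(0, n), (1, n)} = P"
    using piece_subset_board_Suc[OF D' P(1)] P(2,3) by blast
  have "ext_domino_bot n ?S = D'"
    unfolding ext_domino_bot_def piece unfolding S
      glue_insert[OF restrict_piece_notin_others[OF D' P(1) y]] PB
    using P(1) by blast
  ultimately show ?thesis by blast
qed

lemma ext_new_new_restrict:
  assumes D': "piece_partition (board (Suc n)) D'" and shape: "shape_new_new n D'"
  shows "ext_new_new n (restrict_partition (board n) D') = D'"
proof -
  have A: "{(0, n)} \<in> D'" "{(1, n)} \<in> D'" using shape by (auto simp: shape_new_new_def)
  have "restrict_partition (board n) D' = D' - {{(0, n)}, {(1, n)}}"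
    using restrict_partition_board[OF D', of "{{(0, n)}, {(1, n)}}"] A new_column_disjoint(2,3)
    by (simp add: restrict_partition_insert_eq restrict_partition_empty)
  then show ?thesis using A unfolding ext_new_new_def by blast
qed

lemma ext_top_new_restrict:
  assumes n: "1 \<le> n" and D': "piece_partition (board (Suc n)) D'" and shape: "shape_top_new n D'"
  shows "ext_top_new n (restrict_partition (board n) D') = D'"
proof -
  let ?B = "board n" and ?S = "restrict_partition (board n) D'"
  obtain P where P: "{(1, n)} \<in> D'" "P \<in> D'" "(0, n) \<in> P" "(0, n - 1) \<in> P"
    using shape by (auto simp: shape_top_new_def)
  have "(1, n) \<notin> P" using piece_partition_unique[OF D' P(1,2)] P(3) by auto
  then have PB: "P \<inter> ?B \<union> {(0, n)} = P" using piece_subset_board_Suc[OF D' P(2)] P(3) by blast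
  have x: "(0, n - 1) \<in> P \<inter> ?B" using P(4) last_column_in_board[OF n le0] by blast
  define X where "X = D' - {P, {(1, n)}}"
  have S: "?S = insert (P \<inter> ?B) X"
    using restrict_partition_board[OF D', of "{P, {(1, n)}}"] P x new_column_disjoint(3)
    unfolding X_def by (auto simp: restrict_partition_insert_eq restrict_partition_empty)
  have piece: "piece_of ?S (0, n - 1) = P \<inter> ?B"
    by (rule piece_of_eq[OF piece_partition_restrict_board[OF n D'] _ x]) (simp add: S)
  have notin: "P \<inter> ?B \<notin> insert {(1, n)} X"
    using restrict_piece_notin_others[OF D' P(2) x] x new_column_disjoint(3)
    unfolding X_def by blast
  have "ext_top_new n ?S = glue (insert {(1, n)} (insert (P \<inter> ?B) X)) (P \<inter> ?B) {(0, n)}"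
    unfolding ext_top_new_def piece unfolding S by (rule refl)
  also have "insert {(1, n)} (insert (P \<inter> ?B) X) = insert (P \<inter> ?B) (insert {(1, n)} X)"
    by blast
  also have "glue \<dots> (P \<inter> ?B) {(0, n)} = insert P (insert {(1, n)} X)"
    unfolding glue_insert[OF notin] PB by (rule refl)
  also have "\<dots> = D'" unfolding X_def using P(1,2) by blast
  finally show ?thesis .
qed

lemma ext_new_bot_restrict:
  assumes n: "1 \<le> n" and D': "piece_partition (board (Suc n)) D'" and shape: "shape_new_bot n D'"
  shows "ext_new_bot n (restrict_partition (board n) D') = D'"
proof -
  let ?B = "board n" and ?S = "restrict_partition (board n) D'"
  obtain Q where Q: "{(0, n)} \<in> D'" "Q \<in> D'" "(1, n) \<in> Q" "(1, n - 1) \<in> Q"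
    using shape by (auto simp: shape_new_bot_def)
  have "(0, n) \<notin> Q" using piece_partition_unique[OF D' Q(1,2)] Q(3) by auto
  then have QB: "Q \<inter> ?B \<union> {(1, n)} = Q" using piece_subset_board_Suc[OF D' Q(2)] Q(3) by blast
  have y: "(1, n - 1) \<in> Q \<inter> ?B" using Q(4) last_column_in_board[OF n le_refl] by blast
  define X where "X = D' - {{(0, n)}, Q}"
  have S: "?S = insert (Q \<inter> ?B) X"
    using restrict_partition_board[OF D', of "{{(0, n)}, Q}"] Q y new_column_disjoint(2)
    unfolding X_def by (auto simp: restrict_partition_insert_eq restrict_partition_empty)
  have piece: "piece_of ?S (1, n - 1) = Q \<inter> ?B"
    by (rule piece_of_eq[OF piece_partition_restrict_board[OF n D'] _ y]) (simp add: S)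
  have notin: "Q \<inter> ?B \<notin> X"
    using restrict_piece_notin_others[OF D' Q(2) y] unfolding X_def by blast
  have "ext_new_bot n ?S = insert {(0, n)} (insert Q X)"
    unfolding ext_new_bot_def piece unfolding S glue_insert[OF notin] QB by (rule refl)
  also have "\<dots> = D'" unfolding X_def using Q(1,2) by blast
  finally show ?thesis .
qed

lemma ext_top_bot_restrict:
  assumes n: "1 \<le> n" and D': "piece_partition (board (Suc n)) D'" and shape: "shape_top_bot n D'"
  shows "column_split (restrict_partition (board n) D') (n - 1)
    \<and> ext_top_bot n (restrict_partition (board n) D') = D'"
proof -
  let ?B = "board n" and ?S = "restrict_partition (board n) D'"
  obtain P Q where PQ: "P \<in> D'" "Q \<in> D'" "P \<noteq> Q" "(0, n) \<in> P" "(0, n - 1) \<in> P"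
    "(1, n) \<in> Q" "(1, n - 1) \<in> Q"
    using shape unfolding shape_top_bot_def by blast
  have disj: "P \<inter> Q = {}" using piece_partition_disjoint[OF D' PQ(1-3)] .
  have PB: "P \<inter> ?B \<union> {(0, n)} = P" and QB: "Q \<inter> ?B \<union> {(1, n)} = Q"
    using piece_subset_board_Suc[OF D' PQ(1)] piece_subset_board_Suc[OF D' PQ(2)] PQ disj
    by blast+
  have x: "(0, n - 1) \<in> P \<inter> ?B" and y: "(1, n - 1) \<in> Q \<inter> ?B"
    using PQ(5,7) last_column_in_board[OF n] by auto
  define X where "X = D' - {P, Q}"
  have S: "?S = insert (Q \<inter> ?B) (insert (P \<inter> ?B) X)"
    using restrict_partition_board[OF D', of "{P, Q}"] PQ x y
    unfolding X_def by (auto simp: restrict_partition_insert_eq restrict_partition_empty)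
  have "column_split ?S (n - 1)"
    unfolding column_split_def S X_def using PQ x y disj piece_partition_unique[OF D'] by blast
  moreover have "ext_top_bot n ?S = D'"
  proof -
    have pieces: "piece_of ?S (0, n - 1) = P \<inter> ?B" "piece_of ?S (1, n - 1) = Q \<inter> ?B"
      by (rule piece_of_eq[OF piece_partition_restrict_board[OF n D'] _ x], simp add: S)
        (rule piece_of_eq[OF piece_partition_restrict_board[OF n D'] _ y], simp add: S)
    have notin: "Q \<inter> ?B \<notin> insert (P \<inter> ?B) X" "P \<inter> ?B \<notin> insert Q X"
      using restrict_piece_notin_others[OF D' PQ(1) x] restrict_piece_notin_others[OF D' PQ(2) y]
        x y disj unfolding X_def by blast+
    have "ext_top_bot n ?S = glue (insert Q (insert (P \<inter> ?B) X)) (P \<inter> ?B) {(0, n)}"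
      unfolding ext_top_bot_def pieces unfolding S glue_insert[OF notin(1)] QB by (rule refl)
    also have "insert Q (insert (P \<inter> ?B) X) = insert (P \<inter> ?B) (insert Q X)" by blast
    also have "glue (insert (P \<inter> ?B) (insert Q X)) (P \<inter> ?B) {(0, n)} = insert P (insert Q X)"
      unfolding glue_insert[OF notin(2)] PB by (rule refl)
    also have "\<dots> = D'" unfolding X_def using PQ(1,2) by blast
    finally show ?thesis .
  qed
  ultimately show ?thesis by blast
qed

lemma card_divisions_shape:
  fixes c :: "nat \<Rightarrow> nat"
  assumes n: "1 \<le> n" and "inj c"
    and ext: "\<And>m D. division n m D \<Longrightarrow> C D \<Longrightarrow>
      division (Suc n) (c m) (E D) \<and> Sh (E D) \<and> restrict_partition (board n) (E D) = D"
    and restrict: "\<And>D'. piece_partition (board (Suc n)) D' \<Longrightarrow> Sh D' \<Longrightarrow>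
      C (restrict_partition (board n) D') \<and> E (restrict_partition (board n) D') = D'"
  shows "card {D'. division (Suc n) (c m) D' \<and> Sh D'} = card {D. division n m D \<and> C D}"
proof (rule bij_betw_same_card[symmetric],
    rule bij_betw_byWitness[where f' = "restrict_partition (board n)"])
  show "\<forall>D\<in>{D. division n m D \<and> C D}. restrict_partition (board n) (E D) = D"
    and "E ` {D. division n m D \<and> C D} \<subseteq> {D'. division (Suc n) (c m) D' \<and> Sh D'}"
    using ext by auto
  show "\<forall>D'\<in>{D'. division (Suc n) (c m) D' \<and> Sh D'}. E (restrict_partition (board n) D') = D'"
    using restrict by (auto simp: division_iff_partition)
  show "restrict_partition (board n) ` {D'. division (Suc n) (c m) D' \<and> Sh D'}
      \<subseteq> {D. division n m D \<and> C D}"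
  proof clarify
    fix D' assume D': "division (Suc n) (c m) D'" "Sh D'"
    let ?S = "restrict_partition (board n) D'"
    have P: "piece_partition (board (Suc n)) D'" using D' by (simp add: division_iff_partition)
    have S: "division n (card ?S) ?S"
      using piece_partition_restrict_board[OF n P] by (simp add: division_iff_partition)
    have "division (Suc n) (c (card ?S)) D'"
      using ext[OF S] restrict[OF P D'(2)] by simp
    then have "c (card ?S) = c m" using D'(1) by (simp add: division_iff_partition)
    then show "division n m ?S \<and> C ?S"
      using S restrict[OF P D'(2)] \<open>inj c\<close> by (simp add: inj_eq)
  qed
qed

lemma piece_reaches_left_column:
  assumes D': "piece_partition (board (Suc n)) D'" and P: "P \<in> D'" "(r, n) \<in> P" "r \<le> 1"
    and not_column: "\<not> P \<subseteq> {(0, n), (1, n)}"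
  shows "\<exists>r'. (r', n) \<in> P \<and> (r', n - 1) \<in> P"
proof -
  obtain s t where st: "s \<in> P \<inter> {(0, n), (1, n)}" "t \<in> P - {(0, n), (1, n)}" "adj s t"
    using connected_sq_exits_set[OF piece_partition_connected[OF D' P(1)] P(2) _ not_column] P(3)
    by (cases r) auto
  have "t \<in> board n" using st(2) piece_subset_board_Suc[OF D' P(1)] by blast
  then show ?thesis using st adj_new_column_board by blast
qed

lemma not_column_split_iff_shapes:
  assumes n: "1 \<le> n" and D': "piece_partition (board (Suc n)) D'"
  shows "\<not> column_split D' n \<longleftrightarrow>
    shape_domino_new n D' \<or> shape_domino_top n D' \<or> shape_domino_bot n D'"
proof
  assume "\<not> column_split D' n"
  then obtain P where P: "P \<in> D'" "(0, n) \<in> P" "(1, n) \<in> P" unfolding column_split_def by blast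
  show "shape_domino_new n D' \<or> shape_domino_top n D' \<or> shape_domino_bot n D'"
  proof (cases "P \<subseteq> {(0, n), (1, n)}")
    case True
    then have "P = {(0, n), (1, n)}" using P by blast
    then show ?thesis using P(1) by (simp add: shape_domino_new_def)
  next
    case False
    then obtain r where "(r, n) \<in> P" "(r, n - 1) \<in> P"
      using piece_reaches_left_column[OF D' P(1,2) le0] by blast
    moreover have "(r, n) \<in> board (Suc n)" using piece_partition_subset[OF D' P(1)] calculation
      by blast
    ultimately have "(0, n - 1) \<in> P \<or> (1, n - 1) \<in> P"
      using less_2_cases[of r] by (auto simp: board_def)
    then show ?thesis using P unfolding shape_domino_top_def shape_domino_bot_def by blast
  qed
qed (auto simp: column_split_def shape_domino_new_def shape_domino_top_def shape_domino_bot_def)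

lemma piece_of_single_new_square:
  assumes D': "piece_partition (board (Suc n)) D'" and P: "P \<in> D'" "(r, n) \<in> P" "r \<le> 1"
    and other: "(1 - r, n) \<notin> P"
  shows "P = {(r, n)} \<or> (r, n - 1) \<in> P"
proof (cases "P \<subseteq> {(0, n), (1, n)}")
  case True
  then show ?thesis using P(2,3) other by (cases r) auto
next
  case False
  then obtain r' where r': "(r', n) \<in> P" "(r', n - 1) \<in> P"
    using piece_reaches_left_column[OF D' P] by blast
  have "(r', n) \<in> board (Suc n)" using piece_partition_subset[OF D' P(1)] r'(1) by blast
  then have "r' < 2" by (simp add: board_def)
  have "r' = r"
  proof (rule ccontr)
    assume "r' \<noteq> r"
    then have "r' = 1 - r" using \<open>r' < 2\<close> P(3) by linarith
    then show False using other r'(1) by simp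
  qed
  then show ?thesis using r'(2) by simp
qed

lemma column_split_iff_shapes:
  assumes n: "1 \<le> n" and D': "piece_partition (board (Suc n)) D'"
  shows "column_split D' n \<longleftrightarrow>
    shape_new_new n D' \<or> shape_top_new n D' \<or> shape_new_bot n D' \<or> shape_top_bot n D'"
proof
  assume split: "column_split D' n"
  have "(0, n) \<in> board (Suc n)" "(1, n) \<in> board (Suc n)" by (auto simp: board_def)
  then obtain P Q where P: "P \<in> D'" "(0, n) \<in> P" and Q: "Q \<in> D'" "(1, n) \<in> Q"
    using piece_of_in[OF D'] by blast
  have "(1, n) \<notin> P" "(0, n) \<notin> Q" using split P Q unfolding column_split_def by blast+
  then have "P = {(0, n)} \<or> (0, n - 1) \<in> P" "Q = {(1, n)} \<or> (1, n - 1) \<in> Q" "P \<noteq> Q"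
    using piece_of_single_new_square[OF D' P le0] piece_of_single_new_square[OF D' Q le_refl] P Q
    by auto
  then show "shape_new_new n D' \<or> shape_top_new n D' \<or> shape_new_bot n D' \<or> shape_top_bot n D'"
    using P Q unfolding shape_new_new_def shape_top_new_def shape_new_bot_def shape_top_bot_def
    by metis
next
  assume shapes: "shape_new_new n D' \<or> shape_top_new n D' \<or> shape_new_bot n D' \<or> shape_top_bot n D'"
  show "column_split D' n" unfolding column_split_def
  proof (intro ballI notI, elim conjE)
    fix R assume R: "R \<in> D'" "(0, n) \<in> R" "(1, n) \<in> R"
    have "R \<noteq> {(0, n)}" "R \<noteq> {(1, n)}" using R(2,3) by auto
    then have "{(0, n)} \<notin> D'" "{(1, n)} \<notin> D'"
      using piece_partition_unique[OF D' R(1)] R(2,3) insertI1 by metis+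
    moreover have "\<not> shape_top_bot n D'"
      unfolding shape_top_bot_def using piece_partition_unique[OF D' R(1)] R(2,3) by blast
    ultimately show False
      using shapes by (simp add: shape_new_new_def shape_top_new_def shape_new_bot_def)
  qed
qed

lemma shapes_disjoint:
  assumes n: "1 \<le> n" and D': "piece_partition (board (Suc n)) D'"
  shows "\<not> (shape_domino_new n D' \<and> (shape_domino_top n D' \<or> shape_domino_bot n D'))"
    "\<not> (shape_domino_top n D' \<and> shape_domino_bot n D')"
    "\<not> (shape_new_new n D' \<and> (shape_top_new n D' \<or> shape_new_bot n D' \<or> shape_top_bot n D'))"
    "\<not> (shape_top_new n D' \<and> (shape_new_bot n D' \<or> shape_top_bot n D'))"
    "\<not> (shape_new_bot n D' \<and> shape_top_bot n D')"
proof -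
  note unique = piece_partition_unique[OF D']
  have cells: "(0::nat, n - 1) \<noteq> (0, n)" "(0::nat, n - 1) \<noteq> (1, n)"
    "(1::nat, n - 1) \<noteq> (0, n)" "(1::nat, n - 1) \<noteq> (1, n)" using n by auto
  show "\<not> (shape_domino_new n D' \<and> (shape_domino_top n D' \<or> shape_domino_bot n D'))"
    unfolding shape_domino_new_def shape_domino_top_def shape_domino_bot_def
    using unique cells by blast
  show "\<not> (shape_domino_top n D' \<and> shape_domino_bot n D')"
    unfolding shape_domino_top_def shape_domino_bot_def using unique by metis
  show "\<not> (shape_new_new n D' \<and> (shape_top_new n D' \<or> shape_new_bot n D' \<or> shape_top_bot n D'))"
    unfolding shape_new_new_def shape_top_new_def shape_new_bot_def shape_top_bot_def
    using unique cells by blast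
  show "\<not> (shape_top_new n D' \<and> (shape_new_bot n D' \<or> shape_top_bot n D'))"
    unfolding shape_top_new_def shape_new_bot_def shape_top_bot_def using unique cells by blast
  show "\<not> (shape_new_bot n D' \<and> shape_top_bot n D')"
    unfolding shape_new_bot_def shape_top_bot_def using unique cells by blast
qed

lemma card_shape_domino_new:
  "1 \<le> n \<Longrightarrow> card {D'. division (Suc n) (Suc m) D' \<and> shape_domino_new n D'} = d m n"
  using card_divisions_shape[where c = Suc and C = "\<lambda>_. True" and E = "ext_domino_new n"]
    ext_domino_new_division ext_domino_new_restrict by (simp add: d_def)

lemma card_shape_domino_top:
  "1 \<le> n \<Longrightarrow> card {D'. division (Suc n) m D' \<and> shape_domino_top n D'} = d m n"
  using card_divisions_shape[where c = "\<lambda>m. m" and C = "\<lambda>_. True" and E = "ext_domino_top n"]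
    ext_domino_top_division ext_domino_top_restrict by (simp add: d_def)

lemma card_shape_domino_bot:
  "1 \<le> n \<Longrightarrow> card {D'. division (Suc n) m D' \<and> shape_domino_bot n D'} = s m n"
  using card_divisions_shape[where c = "\<lambda>m. m" and C = "\<lambda>D. column_split D (n - 1)"
      and E = "ext_domino_bot n"]
    ext_domino_bot_division ext_domino_bot_restrict by (simp add: s_eq_card_column_split)

lemma card_shape_new_new:
  "1 \<le> n \<Longrightarrow> card {D'. division (Suc n) (Suc (Suc m)) D' \<and> shape_new_new n D'} = d m n"
  using card_divisions_shape[where c = "\<lambda>m. Suc (Suc m)" and C = "\<lambda>_. True" and E = "ext_new_new n"]
    ext_new_new_division ext_new_new_restrict by (simp add: d_def inj_def)

lemma card_shape_top_new:
  "1 \<le> n \<Longrightarrow> card {D'. division (Suc n) (Suc m) D' \<and> shape_top_new n D'} = d m n"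
  using card_divisions_shape[where c = Suc and C = "\<lambda>_. True" and E = "ext_top_new n"]
    ext_top_new_division ext_top_new_restrict by (simp add: d_def)

lemma card_shape_new_bot:
  "1 \<le> n \<Longrightarrow> card {D'. division (Suc n) (Suc m) D' \<and> shape_new_bot n D'} = d m n"
  using card_divisions_shape[where c = Suc and C = "\<lambda>_. True" and E = "ext_new_bot n"]
    ext_new_bot_division ext_new_bot_restrict by (simp add: d_def)

lemma card_shape_top_bot:
  "1 \<le> n \<Longrightarrow> card {D'. division (Suc n) m D' \<and> shape_top_bot n D'} = s m n"
  using card_divisions_shape[where c = "\<lambda>m. m" and C = "\<lambda>D. column_split D (n - 1)"
      and E = "ext_top_bot n"]
    ext_top_bot_division ext_top_bot_restrict by (simp add: s_eq_card_column_split)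

lemma finite_divisions: "finite {D. division n k D}"
proof (rule finite_subset)
  show "{D. division n k D} \<subseteq> Pow (Pow (board n))" by (auto simp: division_def)
  show "finite (Pow (Pow (board n)))" by (simp add: board_eq)
qed

lemma card_Collect_disj:
  assumes "finite {x. R x}" "\<And>x. R x \<Longrightarrow> P x \<Longrightarrow> Q x \<Longrightarrow> False"
  shows "card {x. R x \<and> (P x \<or> Q x)} = card {x. R x \<and> P x} + card {x. R x \<and> Q x}"
proof -
  have "{x. R x \<and> (P x \<or> Q x)} = {x. R x \<and> P x} \<union> {x. R x \<and> Q x}" by blast
  moreover have "finite {x. R x \<and> P x}" "finite {x. R x \<and> Q x}"
    using assms(1) by (auto intro: finite_subset)
  moreover have "{x. R x \<and> P x} \<inter> {x. R x \<and> Q x} = {}" using assms(2) by blast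
  ultimately show ?thesis by (simp add: card_Un_disjoint)
qed

lemma s_recurrence:
  assumes n: "1 \<le> n"
  shows "s (Suc (Suc k)) (Suc n) = d k n + 2 * d (Suc k) n + s (Suc (Suc k)) n"
proof -
  let ?div = "division (Suc n) (Suc (Suc k))"
  have partition: "?div D' \<Longrightarrow> piece_partition (board (Suc n)) D'" for D'
    by (simp add: division_iff_partition)
  note disjoint = shapes_disjoint[OF n partition]
  have "s (Suc (Suc k)) (Suc n) = card {D'. ?div D' \<and> (shape_new_new n D' \<or>
      (shape_top_new n D' \<or> (shape_new_bot n D' \<or> shape_top_bot n D')))}"
    unfolding s_eq_card_column_split diff_Suc_1
    using column_split_iff_shapes[OF n partition] by (metis (lifting))
  also have "\<dots> = card {D'. ?div D' \<and> shape_new_new n D'} + (card {D'. ?div D' \<and> shape_top_new n D'}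
      + (card {D'. ?div D' \<and> shape_new_bot n D'} + card {D'. ?div D' \<and> shape_top_bot n D'}))"
    using disjoint
    by (subst card_Collect_disj[OF finite_divisions], blast)+ (rule refl)
  finally show ?thesis
    using card_shape_new_new[OF n] card_shape_top_new[OF n] card_shape_new_bot[OF n]
      card_shape_top_bot[OF n] by simp
qed

lemma d_recurrence:
  assumes n: "1 \<le> n"
  shows "d (Suc k) (Suc n) = d k n + d (Suc k) n + s (Suc k) n + s (Suc k) (Suc n)"
proof -
  let ?div = "division (Suc n) (Suc k)"
  have partition: "?div D' \<Longrightarrow> piece_partition (board (Suc n)) D'" for D'
    by (simp add: division_iff_partition)
  note disjoint = shapes_disjoint[OF n partition]
  have "d (Suc k) (Suc n) = card {D'. ?div D' \<and> \<not> column_split D' n} + s (Suc k) (Suc n)"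
    unfolding d_def s_eq_card_column_split diff_Suc_1 using finite_divisions
    by (subst card_Collect_disj[symmetric]) auto
  also have "card {D'. ?div D' \<and> \<not> column_split D' n} = card {D'. ?div D' \<and>
      (shape_domino_new n D' \<or> (shape_domino_top n D' \<or> shape_domino_bot n D'))}"
    using not_column_split_iff_shapes[OF n partition] by (metis (lifting))
  also have "\<dots> = card {D'. ?div D' \<and> shape_domino_new n D'}
      + (card {D'. ?div D' \<and> shape_domino_top n D'} + card {D'. ?div D' \<and> shape_domino_bot n D'})"
    using disjoint by (subst card_Collect_disj[OF finite_divisions], blast)+ (rule refl)
  finally show ?thesis
    using card_shape_domino_new[OF n] card_shape_domino_top[OF n] card_shape_domino_bot[OF n]
    by simp
qed

lemma division_one_iff: "1 \<le> n \<Longrightarrow> division n 1 D \<longleftrightarrow> D = {board n}"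
  using connected_board[of n] last_column_in_board[of n 0]
  by (auto simp: division_def piece_def card_1_singleton_iff)

lemma d_zero: "1 \<le> n \<Longrightarrow> d 0 n = 0"
proof -
  assume "1 \<le> n"
  then have "{D. division n 0 D} = {}"
    using last_column_in_board[of n 0] by (auto simp: division_def)
  then show ?thesis unfolding d_def by (simp only: card.empty)
qed

lemma d_one: "1 \<le> n \<Longrightarrow> d 1 n = 1"
proof -
  assume "1 \<le> n"
  then have "{D. division n 1 D} = {{board n}}" using division_one_iff by blast
  then show ?thesis unfolding d_def by simp
qed

lemma division_card_le: "division n k D \<Longrightarrow> k \<le> card (board n)"
proof -
  assume "division n k D"
  then have D: "piece_partition (board n) D" "card D = k" by (auto simp: division_iff_partition)
  let ?f = "\<lambda>P. SOME z. z \<in> P"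
  have f: "?f P \<in> P" if "P \<in> D" for P
    using piece_partition_nonempty[OF D(1) that] by (simp add: some_in_eq)
  have "inj_on ?f D"
  proof
    fix P Q assume "P \<in> D" "Q \<in> D" "?f P = ?f Q"
    then show "P = Q" using f[of P] f[of Q] piece_partition_unique[OF D(1)] by metis
  qed
  moreover have "?f ` D \<subseteq> board n" using f piece_partition_subset[OF D(1)] by blast
  moreover have "finite (board n)" by (simp add: board_eq)
  ultimately show ?thesis using card_inj_on_le D(2) by blast
qed

lemma board_one: "board 1 = {(0, 0), (1, 0)}"
  by (auto simp: board_def)

lemma divisions_one_empty: "2 < k \<Longrightarrow> {D. division 1 k D} = {}"
proof -
  have "card (board 1) = 2" unfolding board_one by simp
  then show "2 < k \<Longrightarrow> {D. division 1 k D} = {}" using division_card_le[of 1 k] by force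
qed

lemma division_one_two_iff: "division 1 2 D \<longleftrightarrow> D = {{(0, 0)}, {(1, 0)}}"
proof
  assume "division 1 2 D"
  then have D: "piece_partition (board 1) D" "card D = 2" by (auto simp: division_iff_partition)
  have sub: "D \<subseteq> {{(0, 0)}, {(1, 0)}, {(0, 0), (1, 0)}}"
    using piece_partition_subset[OF D(1)] piece_partition_nonempty[OF D(1)]
    unfolding board_one by blast
  have "{(0, 0), (1, 0)} \<notin> D"
  proof
    assume A: "{(0, 0), (1, 0)} \<in> D"
    have "D \<noteq> {{(0, 0), (1, 0)}}" using D(2) by auto
    then obtain R where "R \<in> D" "R \<noteq> {(0, 0), (1, 0)}" using A by blast
    then show False using piece_partition_disjoint[OF D(1) _ A] sub by blast
  qed
  then have "D \<subseteq> {{(0, 0)}, {(1, 0)}}" using sub by blast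
  then show "D = {{(0, 0)}, {(1, 0)}}" using D(2) by (intro card_subset_eq) auto
next
  assume "D = {{(0, 0)}, {(1, 0)}}"
  then show "division 1 2 D"
    unfolding division_def using board_one by (auto simp: piece_singleton)
qed

lemma d_two_one: "d 2 1 = 1"
  unfolding d_def division_one_two_iff by simp

lemma s_two_one: "s 2 1 = 1"
proof -
  have "{D. division 1 2 D \<and> (\<forall>P\<in>D. \<not> ((0, 1 - 1) \<in> P \<and> (1, 1 - 1) \<in> P))}
      = {{{(0, 0)}, {(1, 0)}}}"
    unfolding division_one_two_iff by auto
  then show ?thesis unfolding s_def by simp
qed

definition s2_poly :: "real \<Rightarrow> real" where "s2_poly x = 2 * x - 1"
definition d2_poly :: "real \<Rightarrow> real" where "d2_poly x = 2 * x ^ 2 - x"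
definition s3_poly :: "real \<Rightarrow> real" where
  "s3_poly x = 4/3 * x ^ 3 - 3 * x ^ 2 + 8/3 * x - 1"
definition d3_poly :: "real \<Rightarrow> real" where
  "d3_poly x = 2/3 * x ^ 4 - 4/3 * x ^ 3 + 11/6 * x ^ 2 - 13/6 * x + 1"
definition s4_poly :: "real \<Rightarrow> real" where
  "s4_poly x = 4/15 * x ^ 5 - 4/3 * x ^ 4 + 11/3 * x ^ 3 - 37/6 * x ^ 2 + 167/30 * x - 2"
definition d4_poly :: "real \<Rightarrow> real" where
  "d4_poly x = 4/45 * x ^ 6 - 2/5 * x ^ 5 + 25/18 * x ^ 4 - 7/2 * x ^ 3 + 226/45 * x ^ 2
     - 18/5 * x + 1"

lemmas poly_defs = s2_poly_def d2_poly_def s3_poly_def d3_poly_def s4_poly_def d4_poly_def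

text \<open>The recurrences for \<open>s\<close> and \<open>d\<close>, with \<open>d 0 n = 0\<close> and \<open>d 1 n = 1\<close> substituted.\<close>
lemma poly_recurrences:
  "s2_poly (x + 1) = 0 + 2 * 1 + s2_poly x"
  "d2_poly (x + 1) = 1 + d2_poly x + s2_poly x + s2_poly (x + 1)"
  "s3_poly (x + 1) = 1 + 2 * d2_poly x + s3_poly x"
  "d3_poly (x + 1) = d2_poly x + d3_poly x + s3_poly x + s3_poly (x + 1)"
  "s4_poly (x + 1) = d2_poly x + 2 * d3_poly x + s4_poly x"
  "d4_poly (x + 1) = d3_poly x + d4_poly x + s4_poly x + s4_poly (x + 1)"
  by (simp_all add: poly_defs field_simps power_def numeral_eq_Suc)

lemma s_d_polynomials:
  assumes "1 \<le> n"
  shows "real (s 2 n) = s2_poly (real n) \<and> real (d 2 n) = d2_poly (real n) \<and>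
    real (s 3 n) = s3_poly (real n) \<and> real (d 3 n) = d3_poly (real n) \<and>
    real (s 4 n) = s4_poly (real n) \<and> real (d 4 n) = d4_poly (real n)"
  using assms
proof (induction n rule: nat_induct_at_least)
  case base
  have "d 3 1 = 0" "d 4 1 = 0" "s 3 1 = 0" "s 4 1 = 0"
    using divisions_one_empty[of 3] divisions_one_empty[of 4] by (simp_all add: d_def s_def)
  then show ?case using d_two_one s_two_one by (simp add: poly_defs)
next
  case (Suc n)
  have rec: "s 2 (Suc n) = d 0 n + 2 * d 1 n + s 2 n"
    "s 3 (Suc n) = d 1 n + 2 * d 2 n + s 3 n"
    "s 4 (Suc n) = d 2 n + 2 * d 3 n + s 4 n"
    "d 2 (Suc n) = d 1 n + d 2 n + s 2 n + s 2 (Suc n)"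
    "d 3 (Suc n) = d 2 n + d 3 n + s 3 n + s 3 (Suc n)"
    "d 4 (Suc n) = d 3 n + d 4 n + s 4 n + s 4 (Suc n)"
    using s_recurrence[OF Suc.hyps, of 0] s_recurrence[OF Suc.hyps, of 1]
      s_recurrence[OF Suc.hyps, of 2] d_recurrence[OF Suc.hyps, of 1]
      d_recurrence[OF Suc.hyps, of 2] d_recurrence[OF Suc.hyps, of 3]
    by (simp_all add: eval_nat_numeral)
  have x: "real (Suc n) = real n + 1" by simp
  have s2: "real (s 2 (Suc n)) = s2_poly (real (Suc n))"
    unfolding x poly_recurrences using rec(1) Suc.IH d_zero[OF Suc.hyps] d_one[OF Suc.hyps] by simp
  have s3: "real (s 3 (Suc n)) = s3_poly (real (Suc n))"
    unfolding x poly_recurrences using rec(2) Suc.IH d_one[OF Suc.hyps] by simp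
  have s4: "real (s 4 (Suc n)) = s4_poly (real (Suc n))"
    unfolding x poly_recurrences using rec(3) Suc.IH by simp
  have "real (d 2 (Suc n)) = d2_poly (real (Suc n))"
    using s2 unfolding x poly_recurrences using rec(4) Suc.IH d_one[OF Suc.hyps] by simp
  moreover have "real (d 3 (Suc n)) = d3_poly (real (Suc n))"
    using s3 unfolding x poly_recurrences using rec(5) Suc.IH by simp
  moreover have "real (d 4 (Suc n)) = d4_poly (real (Suc n))"
    using s4 unfolding x poly_recurrences using rec(6) Suc.IH by simp
  ultimately show ?case using s2 s3 s4 by blast
qed

theorem mainTheorem5:
  fixes n :: nat
  assumes "n \<ge> 1"
  shows "real (s 4 n) = 4/15 * real n ^ 5 - 4/3 * real n ^ 4 + 11/3 * real n ^ 3
            - 37/6 * real n ^ 2 + 167/30 * real n - 2 \<and>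
         real (d 4 n) = 4/45 * real n ^ 6 - 2/5 * real n ^ 5 + 25/18 * real n ^ 4
            - 7/2 * real n ^ 3 + 226/45 * real n ^ 2 - 18/5 * real n + 1"
  using s_d_polynomials[OF assms] unfolding s4_poly_def d4_poly_def by simp

end
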